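(* Assume $2J_1>3\theta^*\pi^*(f)$. Then there exist constants $\varepsilon,\eta,K>0$ such that for all $s>0$ and all integers $i,\delta_1,\delta_2\ge0$, $T\ge1$ with $i\le\delta_1$, $\delta_2\ge\delta_1-i$, $i+T\ge\delta_1+1$, writing $\varepsilon_1=\varepsilon_{(0,0),\delta_1}$ and $\varepsilon_2=\varepsilon_{(i,i+T),\delta_2}$, $$\mathbb P\big(\delta_1\varepsilon_1(f)>s,\ d(\varepsilon_1,\hat\pi)<\eta,\ \delta_2\varepsilon_2(f)>s,\ d(\varepsilon_2,\hat\pi)<\eta\big)\le K\exp(-(3\theta^*/2+\varepsilon)s).$$
   Context: Let $E$ be a finite set and $P,Q$ irreducible aperiodic stochastic $E\times E$ matrices with invariant probability vectors $\pi_P,\pi_Q$; $\pi=\pi_P\otimes\pi_Q$. Under $\mathbb P$, $(X_n)_{n\ge0}$, $(Y_n)_{n\ge0}$ are independent stationary Markov chains with transition matrices $P,Q$. Let $f:E\times E\to\mathbb Z$ with gcd of its values equal to $1$, $\nu(f)=\sum f\,d\nu$, and assume $\pi(f)<0$ and (C1): for some $n\ge1$ there are cycles $x_1,\dots,x_n$ w.r.t. $P$ and $y_1,\dots,y_n$ w.r.t. $Q$ (i.e. $P(x_k,x_{k+1})>0$, $Q(y_k,y_{k+1})>0$ for all $k$, indices mod $n$) with $\sum_kf(x_k,y_k)>0$. Let $\Phi(\theta)_{(x,y),(x',y')}=e^{\theta f(x',y')}P_{x,x'}Q_{y,y'}$, $\varphi(\theta)$ its spectral radius, $\theta^*>0$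 the unique positive solution of $\varphi(\theta)=1$, $r^*$ a positive right eigenvector of $\Phi(\theta^* )$ for eigenvalue 1, $R^*_{(x,y),(x',y')}=\frac{r^*(x',y')}{r^*(x,y)}\Phi(\theta^* )_{(x,y),(x',y')}$, $\pi^*$ its invariant probability vector, and $\hat\pi(x,y,x',y')=\pi^*(x,y)R^*_{(x,y),(x',y')}$. The function $f$ is also regarded as a function on $E^2\times E^2$ via $f(x,y,x',y')=f(x',y')$. For $g:E^2\times E^2\to\mathbb R$, $\varphi_1(g)$ is the spectral radius of $\Phi_1(g)_{(x,y,z),(x',y',z')}=\exp(g(x,y,x',y')+g(x,z,x',z'))P_{x,x'}Q_{y,y'}Q_{z,z'}$, and $J_1=\sup_g\{2\hat\pi(g)-\log\varphi_1(g)\}$. For $a=(i,j)$ and $\delta\ge1$, $\varepsilon_{a,\delta}(v)=\frac1\delta\sum_{k=1}^\delta 1\{((X_{i+k-1},Y_{j+k-1}),(X_{i+k},Y_{j+k}))=v\}$, $v\in E^2\times E^2$; $d$ is the total variation metric. *)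

theory Defs
  imports "HOL-Analysis.Analysis"
begin

type_synonym 'e mtx = "'e \<Rightarrow> 'e \<Rightarrow> real"

fun mpow :: "('e::finite) mtx \<Rightarrow> nat \<Rightarrow> 'e mtx" where
  "mpow A 0 = (\<lambda>x y. if x = y then 1 else 0)"
| "mpow A (Suc n) = (\<lambda>x y. \<Sum>z\<in>UNIV. mpow A n x z * A z y)"

definition stochastic :: "('e::finite) mtx \<Rightarrow> bool" where
  "stochastic A \<longleftrightarrow> (\<forall>x y. A x y \<ge> 0) \<and> (\<forall>x. (\<Sum>y\<in>UNIV. A x y) = 1)"

definition irreducible_mtx :: "('e::finite) mtx \<Rightarrow> bool" where
  "irreducible_mtx A \<longleftrightarrow> (\<forall>x y. \<exists>n. mpow A n x y > 0)"

definition aperiodic_mtx :: "('e::finite) mtx \<Rightarrow> bool" where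
  "aperiodic_mtx A \<longleftrightarrow> (\<forall>x. Gcd {n::nat. n > 0 \<and> mpow A n x x > 0} = 1)"

definition invariant_prob :: "('e::finite) mtx \<Rightarrow> ('e \<Rightarrow> real) \<Rightarrow> bool" where
  "invariant_prob A p \<longleftrightarrow> (\<forall>x. p x \<ge> 0) \<and> (\<Sum>x\<in>UNIV. p x) = 1 \<and>
     (\<forall>y. (\<Sum>x\<in>UNIV. p x * A x y) = p y)"

definition spec_rad :: "('n::finite) mtx \<Rightarrow> real" where
  "spec_rad A = Max {cmod c | c. \<exists>v::'n \<Rightarrow> complex. (\<exists>i. v i \<noteq> 0) \<and>
      (\<forall>i. (\<Sum>j\<in>UNIV. complex_of_real (A i j) * v j) = c * v i)}"

definition Phi :: "('e::finite) mtx \<Rightarrow> 'e mtx \<Rightarrow> ('e \<times> 'e \<Rightarrow> int) \<Rightarrow> real \<Rightarrow> ('e \<times> 'e) mtx" where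
  "Phi P Q f \<theta> = (\<lambda>(x,y) (x',y'). exp (\<theta> * of_int (f (x',y'))) * P x x' * Q y y')"

text \<open>The tilted kernel R* built from a positive right eigenvector r.\<close>
definition Rstar :: "('e::finite) mtx \<Rightarrow> 'e mtx \<Rightarrow> ('e \<times> 'e \<Rightarrow> int) \<Rightarrow> real \<Rightarrow> ('e \<times> 'e \<Rightarrow> real)
     \<Rightarrow> ('e \<times> 'e) mtx" where
  "Rstar P Q f \<theta> r = (\<lambda>u u'. r u' / r u * Phi P Q f \<theta> u u')"

definition pihat :: "('e::finite) mtx \<Rightarrow> 'e mtx \<Rightarrow> ('e \<times> 'e \<Rightarrow> int) \<Rightarrow> real \<Rightarrow> ('e \<times> 'e \<Rightarrow> real)
     \<Rightarrow> ('e \<times> 'e \<Rightarrow> real) \<Rightarrow> ('e \<times> 'e) \<times> ('e \<times> 'e) \<Rightarrow> real" where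
  "pihat P Q f \<theta> r ps = (\<lambda>(u,u'). ps u * Rstar P Q f \<theta> r u u')"

definition Phi1 :: "('e::finite) mtx \<Rightarrow> 'e mtx \<Rightarrow> (('e \<times> 'e) \<times> ('e \<times> 'e) \<Rightarrow> real)
     \<Rightarrow> ('e \<times> 'e \<times> 'e) mtx" where
  "Phi1 P Q g = (\<lambda>(x,y,z) (x',y',z'). exp (g ((x,y),(x',y')) + g ((x,z),(x',z'))) * P x x' * Q y y' * Q z z')"

definition J1 :: "('e::finite) mtx \<Rightarrow> 'e mtx \<Rightarrow> (('e \<times> 'e) \<times> ('e \<times> 'e) \<Rightarrow> real) \<Rightarrow> ereal" where
  "J1 P Q ph = (SUP g. ereal (2 * (\<Sum>v\<in>UNIV. ph v * g v) - ln (spec_rad (Phi1 P Q g))))"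

definition emp :: "(nat \<Rightarrow> 'e) \<Rightarrow> (nat \<Rightarrow> 'e) \<Rightarrow> nat \<Rightarrow> nat \<Rightarrow> nat \<Rightarrow> ('e \<times> 'e) \<times> ('e \<times> 'e) \<Rightarrow> real" where
  "emp xs ys i j \<delta> v = (1 / real \<delta>) * (\<Sum>k=1..\<delta>.
      (if ((xs (i+k-1), ys (j+k-1)), (xs (i+k), ys (j+k))) = v then 1 else 0))"

definition integ :: "('a::finite \<Rightarrow> real) \<Rightarrow> ('a \<Rightarrow> real) \<Rightarrow> real" where
  "integ \<mu> h = (\<Sum>v\<in>UNIV. \<mu> v * h v)"

definition tv_dist :: "('a::finite \<Rightarrow> real) \<Rightarrow> ('a \<Rightarrow> real) \<Rightarrow> real" where
  "tv_dist \<mu> \<nu> = (1/2) * (\<Sum>v\<in>UNIV. \<bar>\<mu> v - \<nu> v\<bar>)"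

definition path_weight :: "('e \<Rightarrow> real) \<Rightarrow> 'e mtx \<Rightarrow> nat \<Rightarrow> 'e list \<Rightarrow> real" where
  "path_weight p A N xs = p (xs ! 0) * (\<Prod>k<N. A (xs ! k) (xs ! Suc k))"

text \<open>Probability, under independent stationary chains X (kernel P, initial law pP) and
  Y (kernel Q, initial law pQ), of an event depending only on X_0..X_N, Y_0..Y_N.\<close>
definition chain_prob :: "('e::finite \<Rightarrow> real) \<Rightarrow> 'e mtx \<Rightarrow> ('e \<Rightarrow> real) \<Rightarrow> 'e mtx \<Rightarrow> nat
    \<Rightarrow> ((nat \<Rightarrow> 'e) \<Rightarrow> (nat \<Rightarrow> 'e) \<Rightarrow> bool) \<Rightarrow> real" where
  "chain_prob pP P pQ Q N A = (\<Sum>xs\<in>{xs. length xs = Suc N}. \<Sum>ys\<in>{ys. length ys = Suc N}.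
      path_weight pP P N xs * path_weight pQ Q N ys * (if A (nth xs) (nth ys) then 1 else 0))"

end

theory Submission
  imports Defs "Jordan_Normal_Form.Spectral_Radius"
begin

(* The event is controlled by the exponential Chebyshev inequality with an arbitrary tilt g of
   the pair transitions.  On the event both empirical measures are eta-close to pihat, so the two
   g-sums add up to at least about (delta1 + delta2) pihat(g), while the constraint on the f-sums
   forces delta1, delta2 > s / (pihat(f) + O(eta)).  The joint exponential moment of the two
   g-sums is estimated by conditioning on X: since the two Y-windows do not overlap, it factors
   into V1(X) V2(X), with V the conditional moment generating function of one window, and
   Cauchy-Schwarz bounds E[V1 V2] by the square root of E[V1^2] E[V2^2].  A second moment of V is
   a sum of entries of a power of Phi1(g), the kernel of X driving two independent copies of Y,
   hence O(r^delta) for every r above its spectral radius.  Choosing g almost optimal in J1 makes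
   the exponent exceed (3 theta*/2 + epsilon) s. *)

unbundle no vec_syntax

section \<open>Spectral radius of matrices indexed by a finite type\<close>

definition eigenvalues :: "('n::finite) mtx \<Rightarrow> complex set" where
  "eigenvalues M = {c. \<exists>v::'n \<Rightarrow> complex. (\<exists>i. v i \<noteq> 0) \<and>
      (\<forall>i. (\<Sum>j\<in>UNIV. complex_of_real (M i j) * v j) = c * v i)}"

lemma spec_rad_eigenvalues: "spec_rad M = Max (cmod ` eigenvalues M)"
  unfolding spec_rad_def eigenvalues_def by (rule arg_cong[where f=Max]) blast

text \<open>To use the Jordan normal form library, a matrix indexed by \<^typ>\<open>'n\<close> is transported
  to a \<^typ>\<open>complex mat\<close> along a fixed enumeration of \<^typ>\<open>'n\<close>.\<close>

definition enum_idx :: "nat \<Rightarrow> 'n::finite" where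
  "enum_idx = (SOME h. bij_betw h {0..<CARD('n)} UNIV)"

definition idx_of :: "'n::finite \<Rightarrow> nat" where
  "idx_of = the_inv_into {0..<CARD('n)} enum_idx"

lemma bij_betw_enum_idx: "bij_betw (enum_idx :: nat \<Rightarrow> 'n::finite) {0..<CARD('n)} UNIV"
proof -
  have "\<exists>h. bij_betw h {0..<CARD('n)} (UNIV :: 'n set)"
    using ex_bij_betw_nat_finite[of "UNIV :: 'n set"] by simp
  then show ?thesis unfolding enum_idx_def by (rule someI_ex)
qed

lemma enum_idx_idx_of [simp]: "enum_idx (idx_of x) = (x :: 'n::finite)"
  unfolding idx_of_def using bij_betw_enum_idx[where 'n='n]
  by (simp add: bij_betw_def f_the_inv_into_f)

lemma idx_of_less [simp]: "idx_of (x :: 'n::finite) < CARD('n)"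
  unfolding idx_of_def using bij_betw_enum_idx[where 'n='n]
  by (metis atLeastLessThan_iff bij_betw_def iso_tuple_UNIV_I the_inv_into_into subset_refl)

lemma idx_of_enum_idx [simp]: "l < CARD('n) \<Longrightarrow> idx_of (enum_idx l :: 'n::finite) = l"
  unfolding idx_of_def using bij_betw_enum_idx[where 'n='n]
  by (simp add: bij_betw_def the_inv_into_f_f)

lemma sum_UNIV_enum_idx: "(\<Sum>j\<in>(UNIV :: 'n::finite set). F j) = (\<Sum>l\<in>{0..<CARD('n)}. F (enum_idx l))"
  using sum.reindex_bij_betw[OF bij_betw_enum_idx, of F] by simp

definition to_cmat :: "('n::finite) mtx \<Rightarrow> complex mat" where
  "to_cmat M = mat CARD('n) CARD('n) (\<lambda>(i,j). complex_of_real (M (enum_idx i) (enum_idx j)))"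

lemma to_cmat_carrier: "to_cmat (M :: ('n::finite) mtx) \<in> carrier_mat CARD('n) CARD('n)"
  unfolding to_cmat_def by simp

lemma mult_to_cmat_vec:
  fixes M :: "('n::finite) mtx"
  assumes "l < CARD('n)"
  shows "(to_cmat M *\<^sub>v vec CARD('n) (\<lambda>k. v (enum_idx k))) $ l
    = (\<Sum>j\<in>UNIV. complex_of_real (M (enum_idx l) j) * v j)"
  using assms unfolding to_cmat_def sum_UNIV_enum_idx[where F = "\<lambda>j. complex_of_real (M _ j) * v j"]
  by (simp add: scalar_prod_def)

lemma eigenvalues_eq_spectrum: "eigenvalues M = spectrum (to_cmat M)"
  for M :: "('n::finite) mtx"
proof (rule Set.set_eqI, rule iffI)
  fix c assume "c \<in> eigenvalues M"
  then obtain v i where "v i \<noteq> 0" and ev: "\<And>i. (\<Sum>j\<in>UNIV. complex_of_real (M i j) * v j) = c * v i"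
    unfolding eigenvalues_def by blast
  define w where "w = vec CARD('n) (\<lambda>k. v (enum_idx k))"
  have "w $ idx_of i \<noteq> 0" unfolding w_def using \<open>v i \<noteq> 0\<close> by simp
  then have "w \<noteq> 0\<^sub>v CARD('n)" by auto
  moreover have "to_cmat M *\<^sub>v w = c \<cdot>\<^sub>v w"
    by (rule eq_vecI) (simp_all add: w_def mult_to_cmat_vec ev, simp add: to_cmat_def)
  ultimately have "eigenvector (to_cmat M) w c"
    unfolding eigenvector_def w_def using to_cmat_carrier[of M] by simp
  then show "c \<in> spectrum (to_cmat M)" unfolding spectrum_def eigenvalue_def by auto
next
  fix c assume "c \<in> spectrum (to_cmat M)"
  then obtain w where "eigenvector (to_cmat M) w c" unfolding spectrum_def eigenvalue_def by auto
  then have w: "w \<in> carrier_vec CARD('n)" "w \<noteq> 0\<^sub>v CARD('n)" and eq: "to_cmat M *\<^sub>v w = c \<cdot>\<^sub>v w"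
    unfolding eigenvector_def using to_cmat_carrier[of M] by auto
  define v where "v x = w $ idx_of x" for x :: 'n
  have w_eq: "w = vec CARD('n) (\<lambda>k. v (enum_idx k))"
    using w(1) unfolding v_def by (intro eq_vecI) auto
  obtain l where "l < CARD('n)" "w $ l \<noteq> 0"
    using w by (metis carrier_vecD eq_vecI index_zero_vec(1,2))
  then have "v (enum_idx l) \<noteq> 0" unfolding v_def by simp
  moreover have "(\<Sum>j\<in>UNIV. complex_of_real (M i j) * v j) = c * v i" for i
  proof -
    have "(\<Sum>j\<in>UNIV. complex_of_real (M i j) * v j) = (to_cmat M *\<^sub>v w) $ idx_of i"
      using mult_to_cmat_vec[of "idx_of i" M v] by (simp add: w_eq)
    also have "\<dots> = c * v i" using w(1) by (simp add: eq v_def)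
    finally show ?thesis .
  qed
  ultimately show "c \<in> eigenvalues M" unfolding eigenvalues_def by blast
qed

lemma spec_rad_eq_spectral_radius: "spec_rad M = spectral_radius (to_cmat M)"
  unfolding spec_rad_eigenvalues spectral_radius_def eigenvalues_eq_spectrum by simp

lemma spec_rad_mem_eigenvalues: "spec_rad (M :: ('n::finite) mtx) \<in> cmod ` eigenvalues M"
  unfolding spec_rad_eq_spectral_radius eigenvalues_eq_spectrum
  using spectral_radius_mem_max(1)[OF to_cmat_carrier[of M]] by simp

lemma eigenvalue_le_spec_rad: "c \<in> eigenvalues (M :: ('n::finite) mtx) \<Longrightarrow> cmod c \<le> spec_rad M"
  unfolding spec_rad_eq_spectral_radius eigenvalues_eq_spectrum
  using spectral_radius_mem_max(2)[OF to_cmat_carrier[of M]] by simp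

lemma spec_rad_nonneg: "spec_rad M \<ge> 0"
  using spec_rad_mem_eigenvalues[of M] by auto

lemma spec_rad_divide_le:
  assumes "r > 0"
  shows "spec_rad (\<lambda>i j. M i j / r) \<le> spec_rad M / r"
proof -
  obtain c where c: "spec_rad (\<lambda>i j. M i j / r) = cmod c" and "c \<in> eigenvalues (\<lambda>i j. M i j / r)"
    using spec_rad_mem_eigenvalues[of "\<lambda>i j. M i j / r"] by (rule imageE)
  then obtain v where v: "\<exists>i. v i \<noteq> 0"
    and ev: "\<And>i. (\<Sum>j\<in>UNIV. complex_of_real (M i j / r) * v j) = c * v i"
    unfolding eigenvalues_def by blast
  have "(\<Sum>j\<in>UNIV. complex_of_real (M i j) * v j) = of_real r * c * v i" for i
  proof -
    have "M i j = r * (M i j / r)" for j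
      using assms by simp
    then have scale: "complex_of_real (M i j) = of_real r * of_real (M i j / r)" for j
      by (metis of_real_mult)
    have "(\<Sum>j\<in>UNIV. complex_of_real (M i j) * v j)
        = of_real r * (\<Sum>j\<in>UNIV. complex_of_real (M i j / r) * v j)"
      unfolding sum_distrib_left by (intro sum.cong refl) (metis scale mult.assoc)
    then show ?thesis unfolding ev by (simp only: mult.assoc)
  qed
  with v have "of_real r * c \<in> eigenvalues M" unfolding eigenvalues_def by blast
  then have "cmod (of_real r * c) \<le> spec_rad M" by (rule eigenvalue_le_spec_rad)
  then have "r * spec_rad (\<lambda>i j. M i j / r) \<le> spec_rad M"
    using assms c by (simp add: norm_mult)
  with assms show ?thesis by (simp add: pos_le_divide_eq mult.commute)
qed

lemma to_cmat_power:
  fixes M :: "('n::finite) mtx"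
  assumes "i < CARD('n)" "j < CARD('n)"
  shows "(to_cmat M ^\<^sub>m k) $$ (i, j) = complex_of_real (mpow M k (enum_idx i) (enum_idx j))"
  using assms(2)
proof (induction k arbitrary: j)
  case 0
  have "inj_on (enum_idx :: nat \<Rightarrow> 'n) {0..<CARD('n)}"
    using bij_betw_enum_idx bij_betw_def by blast
  then have "(enum_idx i = (enum_idx j :: 'n)) = (i = j)"
    using assms(1) 0 by (auto dest: inj_onD)
  then show ?case using assms(1) 0 by (simp add: to_cmat_def)
next
  case (Suc k)
  have "(to_cmat M ^\<^sub>m Suc k) $$ (i, j)
      = (\<Sum>l\<in>{0..<CARD('n)}. (to_cmat M ^\<^sub>m k) $$ (i, l) * to_cmat M $$ (l, j))"
    using assms(1) Suc.prems to_cmat_carrier[of M] by (simp add: scalar_prod_def row_def col_def)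
  also have "\<dots> = (\<Sum>l\<in>{0..<CARD('n)}.
      complex_of_real (mpow M k (enum_idx i) (enum_idx l) * M (enum_idx l) (enum_idx j)))"
    using Suc by (intro sum.cong) (auto simp: to_cmat_def)
  also have "\<dots> = complex_of_real (mpow M (Suc k) (enum_idx i) (enum_idx j))"
    by (simp add: sum_UNIV_enum_idx[where F = "\<lambda>z. mpow M k _ z * M z _"])
  finally show ?case .
qed

lemma mpow_bounded_if_spec_rad_less_1:
  fixes M :: "('n::finite) mtx"
  assumes "spec_rad M < 1"
  shows "\<exists>C. \<forall>k a b. \<bar>mpow M k a b\<bar> \<le> C"
proof -
  obtain C where C: "\<And>k. norm_bound (to_cmat M ^\<^sub>m k) C"
    using spectral_radius_jnf_norm_bound_less_1_upper_triangular[OF to_cmat_carrier] assms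
    unfolding spec_rad_eq_spectral_radius by blast
  have "\<bar>mpow M k a b\<bar> \<le> C" for k a b
  proof -
    have "norm ((to_cmat M ^\<^sub>m k) $$ (idx_of a, idx_of b)) \<le> C"
      using C[of k] to_cmat_carrier[of M] unfolding norm_bound_def by auto
    then show ?thesis using to_cmat_power[of "idx_of a" "idx_of b" M k] by simp
  qed
  then show ?thesis by blast
qed

lemma mpow_divide: "mpow (\<lambda>i j. M i j / r) k a b = mpow M k a b / r ^ k"
  by (induction k arbitrary: b) (auto simp: sum_divide_distrib mult.commute)

text \<open>Gelfand's formula, in the direction needed here.\<close>

lemma mpow_le_spec_rad_power:
  fixes M :: "('n::finite) mtx"
  assumes "spec_rad M < r"
  shows "\<exists>C>0. \<forall>k a b. \<bar>mpow M k a b\<bar> \<le> C * r ^ k"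
proof -
  have r: "r > 0" using assms spec_rad_nonneg[of M] by linarith
  have "spec_rad M / r < 1" using assms r by simp
  then have "spec_rad (\<lambda>i j. M i j / r) < 1"
    using spec_rad_divide_le[OF r, of M] by linarith
  then obtain C where C: "\<And>k a b. \<bar>mpow M k a b / r ^ k\<bar> \<le> C"
    using mpow_bounded_if_spec_rad_less_1[of "\<lambda>i j. M i j / r"] unfolding mpow_divide by blast
  have "\<bar>mpow M k a b\<bar> \<le> max C 1 * r ^ k" for k a b
  proof -
    have "\<bar>mpow M k a b\<bar> \<le> C * r ^ k"
      using C[of k a b] r by (simp add: abs_divide pos_divide_le_eq)
    also have "\<dots> \<le> max C 1 * r ^ k" using r by (intro mult_right_mono) auto
    finally show ?thesis .
  qed
  then show ?thesis by (intro exI[of _ "max C 1"]) auto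
qed

lemma mpow_nonneg: "(\<forall>i j. M i j \<ge> 0) \<Longrightarrow> mpow M k a b \<ge> 0"
  by (induction k arbitrary: b) (auto intro: sum_nonneg)

lemma mpow_row_sum_ge:
  assumes nonneg: "\<forall>i j. M i j \<ge> 0" and rows: "\<forall>i. (\<Sum>j\<in>UNIV. M i j) \<ge> c" and "c \<ge> 0"
  shows "(\<Sum>b\<in>UNIV. mpow M k a b) \<ge> c ^ k"
proof (induction k)
  case (Suc k)
  have "c ^ Suc k \<le> (\<Sum>z\<in>UNIV. mpow M k a z) * c"
    using Suc \<open>c \<ge> 0\<close> by (simp add: mult_left_mono mult.commute)
  also have "\<dots> \<le> (\<Sum>z\<in>UNIV. mpow M k a z * (\<Sum>b\<in>UNIV. M z b))"
    unfolding sum_distrib_right using rows mpow_nonneg[OF nonneg]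
    by (intro sum_mono mult_left_mono) auto
  also have "\<dots> = (\<Sum>b\<in>UNIV. mpow M (Suc k) a b)"
    by (simp add: sum_distrib_left) (rule sum.swap)
  finally show ?case .
qed simp

text \<open>If all powers were bounded by \<open>C r\<^sup>k\<close> with \<open>r < c\<close>, the row sums \<open>\<ge> c\<^sup>k\<close> of
  \<open>M\<^sup>k\<close> could not grow as they do.\<close>

lemma spec_rad_ge_row_sum:
  fixes M :: "('n::finite) mtx"
  assumes nonneg: "\<forall>i j. M i j \<ge> 0" and rows: "\<forall>i. (\<Sum>j\<in>UNIV. M i j) \<ge> c" and "c > 0"
  shows "spec_rad M \<ge> c"
proof (rule ccontr)
  assume "\<not> spec_rad M \<ge> c"
  define r where "r = (spec_rad M + c) / 2"
  have r: "spec_rad M < r" "r < c" "r > 0"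
    using \<open>\<not> spec_rad M \<ge> c\<close> spec_rad_nonneg[of M] unfolding r_def by auto
  obtain C where C: "\<And>k a b. \<bar>mpow M k a b\<bar> \<le> C * r ^ k"
    using mpow_le_spec_rad_power[OF r(1)] by blast
  fix a :: 'n
  have "c ^ k \<le> real CARD('n) * C * r ^ k" for k
  proof -
    have "c ^ k \<le> (\<Sum>b\<in>UNIV. mpow M k a b)"
      using mpow_row_sum_ge[OF nonneg rows] \<open>c > 0\<close> by simp
    also have "\<dots> \<le> (\<Sum>b\<in>(UNIV::'n set). C * r ^ k)"
      using C by (intro sum_mono) (meson abs_le_D1)
    finally show ?thesis by simp
  qed
  then have "(c / r) ^ k \<le> real CARD('n) * C" for k
    using r by (simp add: power_divide divide_le_eq)
  moreover obtain k where "real CARD('n) * C < (c / r) ^ k"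
    using real_arch_pow[of "c / r" "real CARD('n) * C"] r by auto
  ultimately show False by (meson not_le)
qed

section \<open>Sums over paths\<close>

abbreviation len_lists :: "nat \<Rightarrow> 'a list set" where
  "len_lists n \<equiv> {xs. length xs = n}"

definition path_prod :: "'a mtx \<Rightarrow> nat \<Rightarrow> 'a list \<Rightarrow> real" where
  "path_prod A n xs = (\<Prod>k<n. A (xs ! k) (xs ! Suc k))"

lemma path_weight_eq: "path_weight p A n xs = p (xs ! 0) * path_prod A n xs"
  unfolding path_weight_def path_prod_def ..

lemma path_prod_nonneg: "stochastic A \<Longrightarrow> path_prod A n xs \<ge> 0"
  unfolding path_prod_def stochastic_def by (intro prod_nonneg) auto

lemma path_prod_append:
  assumes "length xs = Suc a" "length ys = Suc b"
  shows "path_prod A (a + 1 + b) (xs @ ys)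
    = path_prod A a xs * A (xs ! a) (ys ! 0) * path_prod A b ys"
proof -
  let ?f = "\<lambda>k. A ((xs @ ys) ! k) ((xs @ ys) ! Suc k)"
  have "path_prod A (a + 1 + b) (xs @ ys)
      = prod ?f {0..<a} * prod ?f {a..<a+1} * prod ?f {a+1..<a+1+b}"
    unfolding path_prod_def lessThan_atLeast0
    using prod.atLeastLessThan_concat[of 0 "a+1" "a+1+b" ?f]
      prod.atLeastLessThan_concat[of 0 a "a+1" ?f]
    by simp
  also have "prod ?f {0..<a} = path_prod A a xs"
    unfolding path_prod_def lessThan_atLeast0 using assms by (intro prod.cong) (auto simp: nth_append)
  also have "prod ?f {a..<a+1} = A (xs ! a) (ys ! 0)" using assms by (simp add: nth_append)
  also have "prod ?f {a+1..<a+1+b} = prod (\<lambda>k. ?f (k + (a+1))) {0..<b}"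
    using prod.shift_bounds_nat_ivl[of ?f 0 "a+1" b] by (simp add: add.commute)
  also have "\<dots> = path_prod A b ys"
    unfolding path_prod_def lessThan_atLeast0 using assms by (intro prod.cong) (auto simp: nth_append)
  finally show ?thesis .
qed

lemma path_prod_snoc:
  "length xs = Suc n \<Longrightarrow> path_prod A (Suc n) (xs @ [y]) = path_prod A n xs * A (xs ! n) y"
  using path_prod_append[of xs n "[y]" 0 A] by (simp add: path_prod_def)

lemma path_prod_Cons: "path_prod A (Suc n) (x # xs) = A x (xs ! 0) * path_prod A n xs"
  unfolding path_prod_def prod.lessThan_Suc_shift by simp

lemma sum_len_lists_append:
  fixes F :: "('a::finite) list \<Rightarrow> real"
  shows "(\<Sum>xs\<in>len_lists (a + b). F xs) = (\<Sum>xs\<in>len_lists a. \<Sum>ys\<in>len_lists b. F (xs @ ys))"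
proof -
  have "(\<Sum>xs\<in>len_lists (a + b). F xs) = (\<Sum>(xs, ys)\<in>len_lists a \<times> len_lists b. F (xs @ ys))"
    by (rule sum.reindex_bij_witness[where i="\<lambda>(xs, ys). xs @ ys" and j="\<lambda>zs. (take a zs, drop a zs)"])
      auto
  then show ?thesis by (simp add: sum.cartesian_product)
qed

lemma sum_len_lists_1:
  fixes F :: "('a::finite) list \<Rightarrow> real"
  shows "(\<Sum>xs\<in>len_lists (Suc 0). F xs) = (\<Sum>x\<in>UNIV. F [x])"
proof -
  have "len_lists (Suc 0) = range (\<lambda>x::'a. [x])"
    by (auto simp: length_Suc_conv)
  then show ?thesis by (simp add: sum.reindex inj_on_def)
qed

lemma sum_len_lists_snoc:
  fixes F :: "('a::finite) list \<Rightarrow> real"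
  shows "(\<Sum>xs\<in>len_lists (Suc n). F xs) = (\<Sum>xs\<in>len_lists n. \<Sum>y\<in>UNIV. F (xs @ [y]))"
  using sum_len_lists_append[of F n 1] by (simp add: sum_len_lists_1)

lemma sum_len_lists_Cons:
  fixes F :: "('a::finite) list \<Rightarrow> real"
  shows "(\<Sum>xs\<in>len_lists (Suc n). F xs) = (\<Sum>x\<in>UNIV. \<Sum>xs\<in>len_lists n. F (x # xs))"
  using sum_len_lists_append[of F 1 n] by (simp add: sum_len_lists_1)

lemma sum_zip_len_lists:
  fixes F :: "('a::finite \<times> 'b::finite) list \<Rightarrow> real"
  shows "(\<Sum>xs\<in>len_lists n. \<Sum>ys\<in>len_lists n. F (zip xs ys)) = (\<Sum>zs\<in>len_lists n. F zs)"
proof -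
  have "(\<Sum>zs\<in>len_lists n. F zs) = (\<Sum>(xs, ys)\<in>len_lists n \<times> len_lists n. F (zip xs ys))"
    by (rule sum.reindex_bij_witness[where i="\<lambda>(xs, ys). zip xs ys" and j="\<lambda>zs. (map fst zs, map snd zs)"])
       (auto simp: zip_map_fst_snd)
  then show ?thesis by (simp add: sum.cartesian_product)
qed

lemma sum_indicator_mult:
  "(\<Sum>v\<in>(UNIV::('a::finite) set). (if a = v then 1 else 0) * h v) = (h a :: real)"
proof -
  have "(\<Sum>v\<in>UNIV. (if a = v then 1 else 0) * h v) = (\<Sum>v\<in>(UNIV::'a set). if a = v then h v else 0)"
    by (rule sum.cong) auto
  then show ?thesis by simp
qed

lemma sum_UNIV_prod:
  "(\<Sum>p\<in>(UNIV::('a::finite \<times> 'b::finite) set). F p) = (\<Sum>a\<in>UNIV. \<Sum>b\<in>UNIV. F (a, b))"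
  by (metis UNIV_Times_UNIV sum.cartesian_product')

lemma sum_path_prod_mpow:
  fixes M :: "('a::finite) mtx"
  shows "(\<Sum>zs\<in>len_lists (Suc n). path_prod M n zs * h (zs ! n))
    = (\<Sum>a\<in>UNIV. \<Sum>b\<in>UNIV. mpow M n a b * h b)"
proof (induction n arbitrary: h)
  case 0
  show ?case by (simp add: sum_len_lists_1 path_prod_def sum_indicator_mult)
next
  case (Suc n)
  have "(\<Sum>zs\<in>len_lists (Suc (Suc n)). path_prod M (Suc n) zs * h (zs ! Suc n))
      = (\<Sum>zs\<in>len_lists (Suc n). \<Sum>y\<in>UNIV. path_prod M (Suc n) (zs @ [y]) * h ((zs @ [y]) ! Suc n))"
    by (rule sum_len_lists_snoc)
  also have "\<dots> = (\<Sum>zs\<in>len_lists (Suc n). path_prod M n zs * (\<Sum>y\<in>UNIV. M (zs ! n) y * h y))"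
    by (intro sum.cong refl) (simp add: path_prod_snoc nth_append sum_distrib_left mult.assoc)
  also have "\<dots> = (\<Sum>a\<in>UNIV. \<Sum>b\<in>UNIV. mpow M n a b * (\<Sum>y\<in>UNIV. M b y * h y))"
    by (rule Suc.IH)
  also have "\<dots> = (\<Sum>a\<in>UNIV. \<Sum>y\<in>UNIV. mpow M (Suc n) a y * h y)"
    by (rule sum.cong[OF refl]) (simp add: sum_distrib_left sum_distrib_right mult.assoc, rule sum.swap)
  finally show ?case .
qed

definition prob_vector :: "('a::finite \<Rightarrow> real) \<Rightarrow> bool" where
  "prob_vector p \<longleftrightarrow> (\<forall>x. p x \<ge> 0) \<and> (\<Sum>x\<in>UNIV. p x) = 1"

lemma prob_vector_le_1: "prob_vector p \<Longrightarrow> p x \<le> 1"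
  unfolding prob_vector_def using member_le_sum[of x UNIV p] by auto

lemma invariant_prob_imp_prob_vector: "invariant_prob A p \<Longrightarrow> prob_vector p"
  unfolding invariant_prob_def prob_vector_def by blast

lemma stochastic_row_prob_vector: "stochastic A \<Longrightarrow> prob_vector (A x)"
  unfolding stochastic_def prob_vector_def by blast

lemma prob_vector_step:
  assumes "stochastic A" "prob_vector p"
  shows "prob_vector (\<lambda>y. \<Sum>x\<in>UNIV. p x * A x y)"
  using assms unfolding prob_vector_def stochastic_def
  by (auto simp: sum_nonneg sum.swap[of _ UNIV] simp flip: sum_distrib_left)

lemma sum_path_weight:
  assumes "stochastic A"
  shows "(\<Sum>xs\<in>len_lists (Suc n). p (xs ! 0) * path_prod A n xs) = (\<Sum>x\<in>UNIV. p x)"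
proof (induction n)
  case 0
  show ?case by (simp add: sum_len_lists_1 path_prod_def)
next
  case (Suc n)
  have rows: "(\<Sum>y\<in>UNIV. A x y) = 1" for x using assms unfolding stochastic_def by auto
  have "(\<Sum>xs\<in>len_lists (Suc (Suc n)). p (xs ! 0) * path_prod A (Suc n) xs)
      = (\<Sum>xs\<in>len_lists (Suc n). \<Sum>y\<in>UNIV. p ((xs @ [y]) ! 0) * path_prod A (Suc n) (xs @ [y]))"
    by (rule sum_len_lists_snoc)
  also have "\<dots> = (\<Sum>xs\<in>len_lists (Suc n). \<Sum>y\<in>UNIV. p (xs ! 0) * path_prod A n xs * A (xs ! n) y)"
    by (intro sum.cong refl) (simp add: path_prod_snoc nth_append)
  also have "\<dots> = (\<Sum>xs\<in>len_lists (Suc n). p (xs ! 0) * path_prod A n xs)"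
    by (simp add: rows flip: sum_distrib_left)
  finally show ?case using Suc by simp
qed

lemma sum_paths_take:
  assumes "stochastic A"
  shows "(\<Sum>xs\<in>len_lists (K + 1 + M). p (xs ! 0) * path_prod A (K + M) xs * H (take (K + 1) xs))
    = (\<Sum>xs\<in>len_lists (K + 1). p (xs ! 0) * path_prod A K xs * H xs)"
proof (cases M)
  case 0
  then show ?thesis by (intro sum.cong) auto
next
  case (Suc M')
  have "(\<Sum>xs\<in>len_lists (K + 1 + M). p (xs ! 0) * path_prod A (K + M) xs * H (take (K + 1) xs))
      = (\<Sum>xs\<in>len_lists (K + 1). \<Sum>ys\<in>len_lists (Suc M').
          p (xs ! 0) * path_prod A K xs * H xs * (A (xs ! K) (ys ! 0) * path_prod A M' ys))"
    unfolding Suc sum_len_lists_append[of _ "K + 1" "Suc M'"]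
  proof (intro sum.cong refl)
    fix xs ys :: "'a list" assume "xs \<in> len_lists (K + 1)" "ys \<in> len_lists (Suc M')"
    then show "p ((xs @ ys) ! 0) * path_prod A (K + Suc M') (xs @ ys) * H (take (K + 1) (xs @ ys))
      = p (xs ! 0) * path_prod A K xs * H xs * (A (xs ! K) (ys ! 0) * path_prod A M' ys)"
      using path_prod_append[of xs K ys M' A] by (simp add: nth_append)
  qed
  also have "\<dots> = (\<Sum>xs\<in>len_lists (K + 1). p (xs ! 0) * path_prod A K xs * H xs)"
    using assms by (simp add: sum_path_weight stochastic_def flip: sum_distrib_left)
  finally show ?thesis .
qed

text \<open>The law at time \<open>m\<close> of the chain started in \<open>p\<close> is again a probability vector,
  hence bounded by \<open>1\<close>.\<close>

lemma sum_paths_drop_le: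
  assumes "stochastic A" "prob_vector p" "\<forall>xs. H xs \<ge> 0"
  shows "(\<Sum>xs\<in>len_lists (m + L + 1). p (xs ! 0) * path_prod A (m + L) xs * H (drop m xs))
    \<le> (\<Sum>xs\<in>len_lists (L + 1). path_prod A L xs * H xs)"
  using assms(2)
proof (induction m arbitrary: p)
  case 0
  have "p (xs ! 0) * (path_prod A L xs * H xs) \<le> path_prod A L xs * H xs" for xs
    using 0 prob_vector_le_1[OF 0] path_prod_nonneg[OF assms(1)] assms(3)
    by (intro mult_left_le_one_le) (auto simp: prob_vector_def)
  then show ?case by (simp add: mult.assoc sum_mono)
next
  case (Suc m)
  let ?p' = "\<lambda>y. \<Sum>x\<in>UNIV. p x * A x y"
  have "(\<Sum>xs\<in>len_lists (Suc m + L + 1). p (xs ! 0) * path_prod A (Suc m + L) xs * H (drop (Suc m) xs))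
      = (\<Sum>x\<in>UNIV. \<Sum>xs\<in>len_lists (m + L + 1). p x * A x (xs ! 0) * path_prod A (m + L) xs * H (drop m xs))"
    by (simp add: sum_len_lists_Cons path_prod_Cons mult.assoc)
  also have "\<dots> = (\<Sum>xs\<in>len_lists (m + L + 1). ?p' (xs ! 0) * path_prod A (m + L) xs * H (drop m xs))"
    by (subst sum.swap) (simp add: sum_distrib_right)
  also have "\<dots> \<le> (\<Sum>xs\<in>len_lists (L + 1). path_prod A L xs * H xs)"
    by (rule Suc.IH[OF prob_vector_step[OF assms(1) Suc.prems]])
  finally show ?case .
qed

section \<open>Exponential moments of two windows\<close>

definition pair_path_sum :: "(('e \<times> 'e) \<times> ('e \<times> 'e) \<Rightarrow> real) \<Rightarrow> nat \<Rightarrow> 'e list \<Rightarrow> 'e list \<Rightarrow> real" where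
  "pair_path_sum g n xs ys = (\<Sum>k<n. g ((xs ! k, ys ! k), (xs ! Suc k, ys ! Suc k)))"

text \<open>Summing over all starting states of the \<open>Q\<close>-path, instead of averaging over an
  initial law, dominates the conditional exponential moment for every initial law.\<close>

definition cond_mgf :: "'e mtx \<Rightarrow> (('e \<times> 'e) \<times> ('e \<times> 'e) \<Rightarrow> real) \<Rightarrow> nat \<Rightarrow> 'e list \<Rightarrow> real" where
  "cond_mgf Q g n xs = (\<Sum>ys\<in>len_lists (Suc n). path_prod Q n ys * exp (pair_path_sum g n xs ys))"

lemma pair_path_sum_cong:
  assumes "\<forall>k\<le>n. xs ! k = xs' ! k" "\<forall>k\<le>n. ys ! k = ys' ! k"
  shows "pair_path_sum g n xs ys = pair_path_sum g n xs' ys'"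
  unfolding pair_path_sum_def using assms by (intro sum.cong refl) auto

lemma cond_mgf_take: "cond_mgf Q g n (take (Suc n) xs) = cond_mgf Q g n xs"
proof -
  have "pair_path_sum g n (take (Suc n) xs) ys = pair_path_sum g n xs ys" for ys
    by (rule pair_path_sum_cong) auto
  then show ?thesis unfolding cond_mgf_def by simp
qed

lemma path_prod_Phi1:
  assumes "length xs = Suc n" "length ys = Suc n" "length zs = Suc n"
  shows "path_prod (Phi1 P Q g) n (zip xs (zip ys zs)) = path_prod P n xs * path_prod Q n ys
    * path_prod Q n zs * exp (pair_path_sum g n xs ys + pair_path_sum g n xs zs)"
proof -
  have "path_prod (Phi1 P Q g) n (zip xs (zip ys zs)) =
     (\<Prod>k<n. exp (g ((xs ! k, ys ! k), (xs ! Suc k, ys ! Suc k))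
                   + g ((xs ! k, zs ! k), (xs ! Suc k, zs ! Suc k)))
        * P (xs ! k) (xs ! Suc k) * Q (ys ! k) (ys ! Suc k) * Q (zs ! k) (zs ! Suc k))"
    unfolding path_prod_def Phi1_def using assms by (intro prod.cong refl) auto
  then show ?thesis
    unfolding path_prod_def pair_path_sum_def exp_add exp_sum[OF finite_lessThan]
    by (simp add: prod.distrib mult_ac)
qed

text \<open>The second moment of \<^const>\<open>cond_mgf\<close> is a sum over paths of the triple chain
  \<open>(X, Y, Y')\<close> with two independent copies of \<open>Y\<close>, i.e. a sum of entries of a power of \<^const>\<open>Phi1\<close>.\<close>

lemma sum_sq_cond_mgf_eq:
  fixes P Q :: "('e::finite) mtx"
  shows "(\<Sum>xs\<in>len_lists (Suc n). path_prod P n xs * (cond_mgf Q g n xs)\<^sup>2)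
    = (\<Sum>a\<in>UNIV. \<Sum>b\<in>UNIV. mpow (Phi1 P Q g) n a b)"
proof -
  have "(\<Sum>xs\<in>len_lists (Suc n). path_prod P n xs * (cond_mgf Q g n xs)\<^sup>2)
      = (\<Sum>xs\<in>len_lists (Suc n). \<Sum>ys\<in>len_lists (Suc n). \<Sum>zs\<in>len_lists (Suc n).
          path_prod P n xs * path_prod Q n ys * path_prod Q n zs
            * exp (pair_path_sum g n xs ys + pair_path_sum g n xs zs))"
    unfolding cond_mgf_def power2_eq_square sum_product exp_add
    by (simp add: sum_distrib_left mult_ac)
  also have "\<dots> = (\<Sum>xs\<in>len_lists (Suc n). \<Sum>ys\<in>len_lists (Suc n). \<Sum>zs\<in>len_lists (Suc n).
          path_prod (Phi1 P Q g) n (zip xs (zip ys zs)))"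
    by (intro sum.cong refl) (simp add: path_prod_Phi1)
  also have "\<dots> = (\<Sum>xs\<in>len_lists (Suc n). \<Sum>ts\<in>len_lists (Suc n). path_prod (Phi1 P Q g) n (zip xs ts))"
    by (intro sum.cong refl) (rule sum_zip_len_lists)
  also have "\<dots> = (\<Sum>ts\<in>len_lists (Suc n). path_prod (Phi1 P Q g) n ts)"
    by (rule sum_zip_len_lists)
  also have "\<dots> = (\<Sum>a\<in>UNIV. \<Sum>b\<in>UNIV. mpow (Phi1 P Q g) n a b)"
    using sum_path_prod_mpow[of "Phi1 P Q g" n "\<lambda>_. 1"] by simp
  finally show ?thesis .
qed

lemma sum_sq_cond_mgf_window_le:
  fixes P Q :: "('e::finite) mtx"
  assumes "stochastic P" "prob_vector p" "i + d \<le> N"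
    and bound: "\<forall>n a b. mpow (Phi1 P Q g) n a b \<le> C * r ^ n"
  shows "(\<Sum>xs\<in>len_lists (Suc N). p (xs ! 0) * path_prod P N xs * (cond_mgf Q g d (drop i xs))\<^sup>2)
    \<le> real CARD('e \<times> 'e \<times> 'e) ^ 2 * C * r ^ d"
proof -
  obtain M where N: "N = i + d + M" using assms(3) le_Suc_ex by blast
  let ?H = "\<lambda>xs. (cond_mgf Q g d xs)\<^sup>2"
  have "(\<Sum>xs\<in>len_lists (Suc N). p (xs ! 0) * path_prod P N xs * (cond_mgf Q g d (drop i xs))\<^sup>2)
      = (\<Sum>xs\<in>len_lists (i + d + 1 + M). p (xs ! 0) * path_prod P (i + d + M) xs
          * (\<lambda>xs. ?H (drop i xs)) (take (i + d + 1) xs))"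
  proof (unfold N, intro sum.cong refl)
    fix xs :: "'e list"
    have "drop i (take (i + d + 1) xs) = take (Suc d) (drop i xs)"
      by (simp add: take_drop add.commute)
    then show "p (xs ! 0) * path_prod P (i + d + M) xs * (cond_mgf Q g d (drop i xs))\<^sup>2
      = p (xs ! 0) * path_prod P (i + d + M) xs * (\<lambda>xs. ?H (drop i xs)) (take (i + d + 1) xs)"
      by (simp add: cond_mgf_take)
  qed simp
  also have "\<dots> = (\<Sum>xs\<in>len_lists (i + d + 1). p (xs ! 0) * path_prod P (i + d) xs * ?H (drop i xs))"
    by (rule sum_paths_take[OF assms(1)])
  also have "\<dots> \<le> (\<Sum>xs\<in>len_lists (d + 1). path_prod P d xs * ?H xs)"
    by (rule sum_paths_drop_le[OF assms(1,2)]) simp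
  also have "\<dots> = (\<Sum>a\<in>UNIV. \<Sum>b\<in>UNIV. mpow (Phi1 P Q g) d a b)"
    using sum_sq_cond_mgf_eq by simp
  also have "\<dots> \<le> (\<Sum>a\<in>(UNIV :: ('e \<times> 'e \<times> 'e) set). \<Sum>b\<in>(UNIV :: ('e \<times> 'e \<times> 'e) set). C * r ^ d)"
    using bound by (intro sum_mono) auto
  finally show ?thesis by (simp add: power2_eq_square)
qed

text \<open>Conditionally on the \<open>X\<close>-path, the two windows of \<open>Y\<close> are separated by at least one
  step; summing over the \<open>Y\<close>-states in between and bounding the law of \<open>Y\<close> at the start of
  the second window by \<open>1\<close> decouples the two exponential moments.\<close>

lemma sum_exp_two_windows_le:
  fixes Q :: "('e::finite) mtx"
  assumes Q: "stochastic Q" and q: "prob_vector q" and N: "N = i + T + d2" and gap: "d1 + 1 \<le> i + T"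
  shows "(\<Sum>ys\<in>len_lists (Suc N). q (ys ! 0) * path_prod Q N ys
      * exp (pair_path_sum g d1 xs ys + pair_path_sum g d2 (drop i xs) (drop (i + T) ys)))
    \<le> cond_mgf Q g d1 xs * cond_mgf Q g d2 (drop i xs)"
proof -
  define m where "m = i + T - (d1 + 1)"
  have split: "Suc N = (d1 + 1) + (m + d2 + 1)" unfolding m_def N using gap by simp
  define H where "H ys = exp (pair_path_sum g d2 (drop i xs) ys)" for ys
  define inner where "inner ys = (\<Sum>zs\<in>len_lists (m + d2 + 1).
      Q (ys ! d1) (zs ! 0) * path_prod Q (m + d2) zs * H (drop m zs))" for ys
  let ?F = "\<lambda>ys. q (ys ! 0) * path_prod Q N ys
    * exp (pair_path_sum g d1 xs ys + pair_path_sum g d2 (drop i xs) (drop (i + T) ys))"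
  have "(\<Sum>ys\<in>len_lists (Suc N). ?F ys)
      = (\<Sum>ys\<in>len_lists (d1 + 1). \<Sum>zs\<in>len_lists (m + d2 + 1). ?F (ys @ zs))"
    unfolding split by (rule sum_len_lists_append)
  also have "\<dots> = (\<Sum>ys\<in>len_lists (d1 + 1).
      q (ys ! 0) * (path_prod Q d1 ys * exp (pair_path_sum g d1 xs ys)) * inner ys)"
    unfolding inner_def sum_distrib_left
  proof (intro sum.cong refl)
    fix ys zs :: "'e list" assume ys: "ys \<in> len_lists (d1 + 1)" and zs: "zs \<in> len_lists (m + d2 + 1)"
    have "path_prod Q N (ys @ zs) = path_prod Q d1 ys * Q (ys ! d1) (zs ! 0) * path_prod Q (m + d2) zs"
      using path_prod_append[of ys d1 zs "m + d2" Q] ys zs split by simp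
    moreover have "pair_path_sum g d1 xs (ys @ zs) = pair_path_sum g d1 xs ys"
      using ys by (intro pair_path_sum_cong) (auto simp: nth_append)
    moreover have "drop (i + T) (ys @ zs) = drop m zs"
      using ys gap unfolding m_def by simp
    ultimately show "q ((ys @ zs) ! 0) * path_prod Q N (ys @ zs)
        * exp (pair_path_sum g d1 xs (ys @ zs) + pair_path_sum g d2 (drop i xs) (drop (i + T) (ys @ zs)))
      = q (ys ! 0) * (path_prod Q d1 ys * exp (pair_path_sum g d1 xs ys))
        * (Q (ys ! d1) (zs ! 0) * path_prod Q (m + d2) zs * H (drop m zs))"
      using ys by (simp add: H_def exp_add nth_append mult_ac)
  qed
  also have "\<dots> \<le> (\<Sum>ys\<in>len_lists (d1 + 1). 1 * (path_prod Q d1 ys * exp (pair_path_sum g d1 xs ys))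
      * cond_mgf Q g d2 (drop i xs))"
  proof (intro sum_mono mult_mono)
    fix ys :: "'e list"
    show "inner ys \<le> cond_mgf Q g d2 (drop i xs)"
      using sum_paths_drop_le[OF Q stochastic_row_prob_vector[OF Q, of "ys ! d1"], of H m d2]
      unfolding inner_def cond_mgf_def H_def by simp
    show "0 \<le> inner ys"
      unfolding inner_def H_def using Q by (simp add: sum_nonneg path_prod_nonneg stochastic_def)
  qed (use q Q in \<open>auto simp: prob_vector_le_1 path_prod_nonneg prob_vector_def\<close>)
  also have "\<dots> = cond_mgf Q g d1 xs * cond_mgf Q g d2 (drop i xs)"
    unfolding cond_mgf_def sum_distrib_right by simp
  finally show ?thesis .
qed

lemma weighted_Cauchy_Schwarz:
  fixes w u v :: "'a \<Rightarrow> real"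
  assumes "\<forall>x\<in>I. w x \<ge> 0"
  shows "(\<Sum>x\<in>I. w x * u x * v x)\<^sup>2 \<le> (\<Sum>x\<in>I. w x * (u x)\<^sup>2) * (\<Sum>x\<in>I. w x * (v x)\<^sup>2)"
proof -
  have "(\<Sum>x\<in>I. w x * u x * v x) = (\<Sum>x\<in>I. (sqrt (w x) * u x) * (sqrt (w x) * v x))"
    and "(\<Sum>x\<in>I. w x * (u x)\<^sup>2) = (\<Sum>x\<in>I. (sqrt (w x) * u x)\<^sup>2)"
    and "(\<Sum>x\<in>I. w x * (v x)\<^sup>2) = (\<Sum>x\<in>I. (sqrt (w x) * v x)\<^sup>2)"
    using assms by (auto intro!: sum.cong simp: power_mult_distrib algebra_simps)
  then show ?thesis by (simp only:) (rule Cauchy_Schwarz_ineq_sum)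
qed

lemma sum_two_cond_mgf_le:
  fixes P Q :: "('e::finite) mtx"
  assumes P: "stochastic P" and p: "prob_vector p" and "d1 \<le> N" "i + d2 \<le> N" "r \<ge> 0"
    and bound: "\<forall>n a b. mpow (Phi1 P Q g) n a b \<le> C * r ^ n"
  shows "(\<Sum>xs\<in>len_lists (Suc N).
      p (xs ! 0) * path_prod P N xs * (cond_mgf Q g d1 xs * cond_mgf Q g d2 (drop i xs)))
    \<le> real CARD('e \<times> 'e \<times> 'e) ^ 2 * C * sqrt (r ^ (d1 + d2))"
proof -
  let ?W = "\<lambda>xs. p (xs ! 0) * path_prod P N xs"
  define K where "K = real CARD('e \<times> 'e \<times> 'e) ^ 2 * C"
  have "C \<ge> 0" using bound[rule_format, of 0 undefined undefined] by simp
  then have "K \<ge> 0" unfolding K_def by simp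
  have W: "\<forall>xs. ?W xs \<ge> 0" using p path_prod_nonneg[OF P] by (simp add: prob_vector_def)
  have "(\<Sum>xs\<in>len_lists (Suc N). ?W xs * (cond_mgf Q g d1 xs * cond_mgf Q g d2 (drop i xs)))\<^sup>2
      \<le> (\<Sum>xs\<in>len_lists (Suc N). ?W xs * (cond_mgf Q g d1 xs)\<^sup>2)
        * (\<Sum>xs\<in>len_lists (Suc N). ?W xs * (cond_mgf Q g d2 (drop i xs))\<^sup>2)"
    using weighted_Cauchy_Schwarz[of "len_lists (Suc N)" ?W "\<lambda>xs. cond_mgf Q g d1 xs"
        "\<lambda>xs. cond_mgf Q g d2 (drop i xs)"] W
    by (simp add: mult.assoc)
  also have "\<dots> \<le> (K * r ^ d1) * (K * r ^ d2)"
    using sum_sq_cond_mgf_window_le[OF P p _ bound, of 0 d1 N]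
      sum_sq_cond_mgf_window_le[OF P p _ bound, of i d2 N] assms(3,4,5) W \<open>K \<ge> 0\<close>
    unfolding K_def[symmetric] by (intro mult_mono) (simp_all add: sum_nonneg)
  also have "\<dots> = (K * sqrt (r ^ (d1 + d2)))\<^sup>2"
    using \<open>r \<ge> 0\<close> by (simp add: power_mult_distrib power_add power2_eq_square)
  finally have sq:
    "(\<Sum>xs\<in>len_lists (Suc N). ?W xs * (cond_mgf Q g d1 xs * cond_mgf Q g d2 (drop i xs)))\<^sup>2
      \<le> (K * sqrt (r ^ (d1 + d2)))\<^sup>2" .
  show ?thesis
    unfolding K_def[symmetric] by (rule power2_le_imp_le[OF sq]) (simp add: \<open>K \<ge> 0\<close> \<open>r \<ge> 0\<close>)
qed

text \<open>Exponential Chebyshev inequality for the event, followed by the two bounds above.\<close>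

lemma chain_prob_two_windows_le:
  fixes P Q :: "('e::finite) mtx"
  assumes P: "stochastic P" and Q: "stochastic Q" and p: "prob_vector piP" and q: "prob_vector piQ"
    and bound: "\<forall>n a b. mpow (Phi1 P Q g) n a b \<le> C * r ^ n" and "r \<ge> 0"
    and N: "N = i + T + d2" and gap: "d1 + 1 \<le> i + T"
    and event: "\<And>xs ys. length xs = Suc N \<Longrightarrow> length ys = Suc N \<Longrightarrow> A (nth xs) (nth ys) \<Longrightarrow>
       c \<le> pair_path_sum g d1 xs ys + pair_path_sum g d2 (drop i xs) (drop (i + T) ys)"
  shows "chain_prob piP P piQ Q N A
    \<le> real CARD('e \<times> 'e \<times> 'e) ^ 2 * C * sqrt (r ^ (d1 + d2)) * exp (- c)"
proof -
  let ?W = "\<lambda>xs. piP (xs ! 0) * path_prod P N xs"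
    and ?V = "\<lambda>ys. piQ (ys ! 0) * path_prod Q N ys"
  define S where
    "S xs ys = pair_path_sum g d1 xs ys + pair_path_sum g d2 (drop i xs) (drop (i + T) ys)" for xs ys
  have W: "?W xs \<ge> 0" and V: "?V ys \<ge> 0" for xs ys
    using p q path_prod_nonneg[OF P] path_prod_nonneg[OF Q] by (simp_all add: prob_vector_def)
  have "chain_prob piP P piQ Q N A
      = (\<Sum>xs\<in>len_lists (Suc N). \<Sum>ys\<in>len_lists (Suc N).
          ?W xs * ?V ys * (if A (nth xs) (nth ys) then 1 else 0))"
    unfolding chain_prob_def path_weight_eq ..
  also have "\<dots> \<le> (\<Sum>xs\<in>len_lists (Suc N). \<Sum>ys\<in>len_lists (Suc N).
      ?W xs * ?V ys * exp (S xs ys - c))"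
    using event W V unfolding S_def by (intro sum_mono mult_left_mono) (auto intro: mult_nonneg_nonneg)
  also have "\<dots> = exp (- c)
      * (\<Sum>xs\<in>len_lists (Suc N). ?W xs * (\<Sum>ys\<in>len_lists (Suc N). ?V ys * exp (S xs ys)))"
    unfolding sum_distrib_left by (intro sum.cong refl) (simp add: exp_diff exp_minus field_simps)
  also have "\<dots> \<le> exp (- c)
      * (\<Sum>xs\<in>len_lists (Suc N). ?W xs * (cond_mgf Q g d1 xs * cond_mgf Q g d2 (drop i xs)))"
    unfolding S_def using sum_exp_two_windows_le[OF Q q N gap] W
    by (intro mult_left_mono sum_mono) auto
  also have "\<dots> \<le> exp (- c) * (real CARD('e \<times> 'e \<times> 'e) ^ 2 * C * sqrt (r ^ (d1 + d2)))"
    using gap N \<open>r \<ge> 0\<close> by (intro mult_left_mono sum_two_cond_mgf_le[OF P p _ _ _ bound]) auto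
  finally show ?thesis by (simp add: mult.commute)
qed

section \<open>Empirical measures\<close>

lemma emp_integ: "real d * integ (emp X Y i j d) h
  = (\<Sum>k<d. h ((X (i + k), Y (j + k)), (X (Suc (i + k)), Y (Suc (j + k)))))"
proof (cases "d = 0")
  case False
  define w where "w k = ((X (i + k - 1), Y (j + k - 1)), (X (i + k), Y (j + k)))" for k
  have "integ (emp X Y i j d) h
      = (1 / real d) * (\<Sum>k=1..d. \<Sum>v\<in>UNIV. (if w k = v then 1 else 0) * h v)"
    unfolding integ_def emp_def w_def
    by (simp add: sum_distrib_right sum_distrib_left mult.assoc sum.swap[of _ UNIV])
  also have "\<dots> = (1 / real d) * (\<Sum>k=1..d. h (w k))"
    by (simp only: sum_indicator_mult)
  finally have "real d * integ (emp X Y i j d) h = (\<Sum>k=1..d. h (w k))" using False by simp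
  also have "\<dots> = (\<Sum>k<d. h (w (Suc k)))" by (simp add: sum.atLeast1_atMost_eq)
  finally show ?thesis unfolding w_def by simp
qed (simp add: emp_def integ_def)

lemma emp_integ_eq_pair_path_sum:
  assumes "i \<le> length xs" "j \<le> length ys"
  shows "real d * integ (emp (nth xs) (nth ys) i j d) h = pair_path_sum h d (drop i xs) (drop j ys)"
  unfolding emp_integ pair_path_sum_def using assms by (simp add: nth_drop)

lemma integ_diff_le_tv_dist:
  assumes "\<forall>v. \<bar>h v\<bar> \<le> F"
  shows "\<bar>integ e h - integ q h\<bar> \<le> 2 * F * tv_dist e q"
proof -
  have "\<bar>integ e h - integ q h\<bar> = \<bar>\<Sum>v\<in>UNIV. (e v - q v) * h v\<bar>"
    unfolding integ_def by (simp add: sum_subtractf left_diff_distrib)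
  also have "\<dots> \<le> (\<Sum>v\<in>UNIV. \<bar>e v - q v\<bar> * F)"
    using assms by (intro sum_abs[THEN order_trans] sum_mono) (simp add: abs_mult mult_left_mono)
  also have "\<dots> = 2 * F * tv_dist e q"
    unfolding tv_dist_def by (simp add: sum_distrib_right[symmetric])
  finally show ?thesis .
qed

lemma integ_pihat:
  assumes "invariant_prob (Rstar P Q f \<theta> r) ps"
  shows "integ (pihat P Q f \<theta> r ps) (\<lambda>(_, u'). h u') = integ ps h"
proof -
  have inv: "(\<Sum>u\<in>UNIV. ps u * Rstar P Q f \<theta> r u u') = ps u'" for u'
    using assms unfolding invariant_prob_def by blast
  have "integ (pihat P Q f \<theta> r ps) (\<lambda>(_, u'). h u')
      = (\<Sum>u\<in>UNIV. \<Sum>u'\<in>UNIV. ps u * Rstar P Q f \<theta> r u u' * h u')"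
    unfolding integ_def pihat_def by (subst sum_UNIV_prod) simp
  also have "\<dots> = (\<Sum>u'\<in>UNIV. (\<Sum>u\<in>UNIV. ps u * Rstar P Q f \<theta> r u u') * h u')"
    by (subst sum.swap) (simp add: sum_distrib_right)
  finally show ?thesis unfolding inv integ_def .
qed

lemma Phi1_row_sum_ge:
  fixes P Q :: "('e::finite) mtx"
  assumes P: "stochastic P" and Q: "stochastic Q" and G: "\<forall>v. \<bar>g v\<bar> \<le> G"
  shows "(\<Sum>u'\<in>UNIV. Phi1 P Q g u u') \<ge> exp (- 2 * G)"
proof -
  obtain x y z where u: "u = (x, y, z)" by (cases u) auto
  have P0: "\<forall>i j. P i j \<ge> 0" and P1: "\<forall>x. (\<Sum>y\<in>UNIV. P x y) = 1"
    and Q0: "\<forall>i j. Q i j \<ge> 0" and Q1: "\<forall>x. (\<Sum>y\<in>UNIV. Q x y) = 1"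
    using P Q unfolding stochastic_def by auto
  have le: "exp (- 2 * G) * (P x x' * Q y y' * Q z z') \<le> Phi1 P Q g (x, y, z) (x', y', z')"
    for x' y' z'
  proof -
    have "- 2 * G \<le> g ((x, y), (x', y')) + g ((x, z), (x', z'))"
      using G[rule_format, of "((x, y), (x', y'))"] G[rule_format, of "((x, z), (x', z'))"]
      by linarith
    then show ?thesis unfolding Phi1_def using P0 Q0 by (simp add: mult.assoc mult_right_mono)
  qed
  have "exp (- 2 * G) = (\<Sum>x'\<in>UNIV. \<Sum>y'\<in>UNIV. \<Sum>z'\<in>UNIV. exp (- 2 * G) * (P x x' * Q y y' * Q z z'))"
    by (simp add: P1 Q1 mult.assoc flip: sum_distrib_left sum_distrib_right)
  also have "\<dots> \<le> (\<Sum>x'\<in>UNIV. \<Sum>y'\<in>UNIV. \<Sum>z'\<in>UNIV. Phi1 P Q g (x, y, z) (x', y', z'))"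
    using le by (intro sum_mono)
  also have "\<dots> = (\<Sum>u'\<in>UNIV. Phi1 P Q g u u')"
    unfolding u by (simp add: sum_UNIV_prod)
  finally show ?thesis .
qed

lemma spec_rad_Phi1_pos:
  assumes "stochastic P" "stochastic Q"
  shows "spec_rad (Phi1 P Q g) > 0"
proof -
  have "\<forall>v. \<bar>g v\<bar> \<le> (\<Sum>v\<in>UNIV. \<bar>g v\<bar>)" by (auto intro: member_le_sum)
  then have "spec_rad (Phi1 P Q g) \<ge> exp (- 2 * (\<Sum>v\<in>UNIV. \<bar>g v\<bar>))"
    using assms by (intro spec_rad_ge_row_sum Phi1_row_sum_ge allI)
      (auto simp: Phi1_def stochastic_def)
  then show ?thesis by (meson exp_gt_zero less_le_trans)
qed

lemma J1_gt_imp_ex: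
  assumes "2 * J1 P Q ph > ereal x"
  shows "\<exists>g. x / 2 < 2 * integ ph g - ln (spec_rad (Phi1 P Q g))"
proof -
  have "ereal (x / 2) < J1 P Q ph"
    using assms by (cases "J1 P Q ph") auto
  then show ?thesis unfolding J1_def integ_def less_SUP_iff by auto
qed

section \<open>Large deviations of two windows\<close>

lemma sqrt_power_eq_exp:
  assumes "r > 0"
  shows "sqrt (r ^ n) = exp (real n / 2 * ln r)"
proof -
  have "exp (real n / 2 * ln r) ^ 2 = exp (real n * ln r)"
    by (simp add: power2_eq_square flip: exp_add)
  also have "\<dots> = r ^ n"
    using assms by (simp add: exp_of_nat_mult)
  finally show ?thesis by (metis abs_of_pos exp_gt_zero real_sqrt_abs)
qed

text \<open>On the event, each window's empirical measure is \<open>\<eta>\<close>-close to \<open>ph\<close>, which bounds its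
  \<open>h\<close>-average from above (so the window is long compared to \<open>s\<close>) and its \<open>g\<close>-average from
  below; the tolerance condition \<open>tol\<close> turns this into an exponent of at least \<open>b s\<close>.\<close>

lemma chain_prob_two_windows_exp_le:
  fixes P Q :: "('e::finite) mtx" and h g ph :: "('e \<times> 'e) \<times> ('e \<times> 'e) \<Rightarrow> real"
  assumes P: "stochastic P" and Q: "stochastic Q" and p: "prob_vector piP" and q: "prob_vector piQ"
    and bound: "\<forall>n a b. mpow (Phi1 P Q g) n a b \<le> C * r ^ n" and "r > 0"
    and F: "\<forall>v. \<bar>h v\<bar> \<le> F" and G: "\<forall>v. \<bar>g v\<bar> \<le> G" and "b \<ge> 0"
    and tol: "b * (integ ph h + 2 * \<eta> * F) \<le> 2 * (integ ph g - 2 * \<eta> * G) - ln r"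
    and gap: "d1 + 1 \<le> i + T"
  shows "chain_prob piP P piQ Q (i + T + d2)
      (\<lambda>X Y. real d1 * integ (emp X Y 0 0 d1) h > s \<and> tv_dist (emp X Y 0 0 d1) ph < \<eta>
          \<and> real d2 * integ (emp X Y i (i + T) d2) h > s \<and> tv_dist (emp X Y i (i + T) d2) ph < \<eta>)
    \<le> real CARD('e \<times> 'e \<times> 'e) ^ 2 * C * exp (- b * s)"
proof -
  define L where "L = 2 * (integ ph g - 2 * \<eta> * G) - ln r"
  have window: "b * s \<le> real d * L \<and> real d * (integ ph g - 2 * \<eta> * G) \<le> real d * integ e g"
    if close: "tv_dist e ph < \<eta>" and long: "real d * integ e h > s" for e and d :: nat
  proof
    have "F \<ge> 0" "G \<ge> 0" using F G by (meson abs_ge_zero order_trans)+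
    then have "2 * F * tv_dist e ph \<le> 2 * F * \<eta>" "2 * G * tv_dist e ph \<le> 2 * G * \<eta>"
      using close by (simp_all add: mult_left_mono)
    then have "\<bar>integ e h - integ ph h\<bar> \<le> 2 * F * \<eta>" "\<bar>integ e g - integ ph g\<bar> \<le> 2 * G * \<eta>"
      using integ_diff_le_tv_dist[OF F, of e ph] integ_diff_le_tv_dist[OF G, of e ph] by linarith+
    then have h_le: "integ e h \<le> integ ph h + 2 * \<eta> * F"
      and g_ge: "integ ph g - 2 * \<eta> * G \<le> integ e g"
      by (simp_all add: abs_le_iff algebra_simps)
    have "b * s \<le> b * (real d * integ e h)" using long \<open>b \<ge> 0\<close> by (simp add: mult_left_mono)
    also have "\<dots> \<le> real d * (b * (integ ph h + 2 * \<eta> * F))"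
      using h_le \<open>b \<ge> 0\<close> by (simp add: mult_left_mono mult.left_commute)
    also have "\<dots> \<le> real d * L" using tol unfolding L_def by (simp add: mult_left_mono)
    finally show "b * s \<le> real d * L" .
    show "real d * (integ ph g - 2 * \<eta> * G) \<le> real d * integ e g"
      using g_ge by (simp add: mult_left_mono)
  qed
  define c where "c = b * s + (real d1 + real d2) * ln r / 2"
  have "chain_prob piP P piQ Q (i + T + d2)
      (\<lambda>X Y. real d1 * integ (emp X Y 0 0 d1) h > s \<and> tv_dist (emp X Y 0 0 d1) ph < \<eta>
          \<and> real d2 * integ (emp X Y i (i + T) d2) h > s \<and> tv_dist (emp X Y i (i + T) d2) ph < \<eta>)
    \<le> real CARD('e \<times> 'e \<times> 'e) ^ 2 * C * sqrt (r ^ (d1 + d2)) * exp (- c)"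
  proof (rule chain_prob_two_windows_le[OF P Q p q bound _ refl gap])
    fix xs ys :: "'e list"
    let ?e1 = "emp (nth xs) (nth ys) 0 0 d1" and ?e2 = "emp (nth xs) (nth ys) i (i + T) d2"
    assume "length xs = Suc (i + T + d2)" "length ys = Suc (i + T + d2)"
    then have S1: "pair_path_sum g d1 xs ys = real d1 * integ ?e1 g"
      and S2: "pair_path_sum g d2 (drop i xs) (drop (i + T) ys) = real d2 * integ ?e2 g"
      by (simp_all add: emp_integ_eq_pair_path_sum)
    assume "real d1 * integ ?e1 h > s \<and> tv_dist ?e1 ph < \<eta>
      \<and> real d2 * integ ?e2 h > s \<and> tv_dist ?e2 ph < \<eta>"
    then have w1: "b * s \<le> real d1 * L" "real d1 * (integ ph g - 2 * \<eta> * G) \<le> real d1 * integ ?e1 g"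
      and w2: "b * s \<le> real d2 * L" "real d2 * (integ ph g - 2 * \<eta> * G) \<le> real d2 * integ ?e2 g"
      using window by blast+
    have "real d1 * L + real d2 * L + (real d1 + real d2) * ln r
        = 2 * (real d1 * (integ ph g - 2 * \<eta> * G) + real d2 * (integ ph g - 2 * \<eta> * G))"
      unfolding L_def by (simp add: algebra_simps)
    then show "c \<le> pair_path_sum g d1 xs ys + pair_path_sum g d2 (drop i xs) (drop (i + T) ys)"
      unfolding c_def S1 S2 using w1 w2 by argo
  qed (use \<open>r > 0\<close> in simp)
  also have "\<dots> = real CARD('e \<times> 'e \<times> 'e) ^ 2 * C * exp (- b * s)"
  proof -
    have "sqrt (r ^ (d1 + d2)) * exp (- c) = exp (- b * s)"
      unfolding sqrt_power_eq_exp[OF \<open>r > 0\<close>] c_def by (simp add: field_simps flip: exp_add)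
    then show ?thesis by (simp only: mult.assoc)
  qed
  finally show ?thesis .
qed

lemma ex_small_tolerances:
  fixes \<delta> a m F G :: real
  assumes "\<delta> > 0" "a \<ge> 0" "F \<ge> 0" "G \<ge> 0"
  shows "\<exists>\<eta>>0. \<exists>\<epsilon>>0. (a + \<epsilon>) * (m + 2 * \<eta> * F) + 4 * \<eta> * G \<le> a * m + \<delta>"
proof -
  define \<epsilon> where "\<epsilon> = \<delta> / (2 * (\<bar>m\<bar> + 1))"
  define E where "E = 2 * F * (a + \<epsilon>) + 4 * G"
  define \<eta> where "\<eta> = \<delta> / (2 * (E + 1))"
  have "\<epsilon> > 0" using assms by (simp add: \<epsilon>_def)
  then have "E \<ge> 0" using assms by (simp add: E_def)
  then have "\<eta> > 0" using assms by (simp add: \<eta>_def)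
  have "\<epsilon> * m \<le> \<epsilon> * (\<bar>m\<bar> + 1)" using \<open>\<epsilon> > 0\<close> by (intro mult_left_mono) auto
  also have "\<dots> = \<delta> / 2" unfolding \<epsilon>_def by (simp add: field_simps)
  finally have "\<epsilon> * m \<le> \<delta> / 2" .
  moreover have "\<eta> * E \<le> \<eta> * (E + 1)" using \<open>\<eta> > 0\<close> by simp
  moreover have "\<eta> * (E + 1) = \<delta> / 2" unfolding \<eta>_def using \<open>E \<ge> 0\<close> by (simp add: field_simps)
  moreover have "(a + \<epsilon>) * (m + 2 * \<eta> * F) + 4 * \<eta> * G = a * m + \<epsilon> * m + \<eta> * E"
    unfolding E_def by (simp add: algebra_simps)
  ultimately have "(a + \<epsilon>) * (m + 2 * \<eta> * F) + 4 * \<eta> * G \<le> a * m + \<delta>" by linarith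
  with \<open>\<epsilon> > 0\<close> \<open>\<eta> > 0\<close> show ?thesis by blast
qed

lemma two_windows_large_deviation:
  fixes P Q :: "('e::finite) mtx" and h g ph :: "('e \<times> 'e) \<times> ('e \<times> 'e) \<Rightarrow> real"
  assumes P: "stochastic P" and Q: "stochastic Q" and p: "prob_vector piP" and q: "prob_vector piQ"
    and "a \<ge> 0" and slack: "a * integ ph h < 2 * integ ph g - ln (spec_rad (Phi1 P Q g))"
  obtains \<epsilon> \<eta> K where "\<epsilon> > 0" "\<eta> > 0" "K > 0"
    and "\<And>s i d1 d2 T. d1 + 1 \<le> i + T \<Longrightarrow>
       chain_prob piP P piQ Q (i + T + d2)
         (\<lambda>X Y. real d1 * integ (emp X Y 0 0 d1) h > s \<and> tv_dist (emp X Y 0 0 d1) ph < \<eta>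
            \<and> real d2 * integ (emp X Y i (i + T) d2) h > s \<and> tv_dist (emp X Y i (i + T) d2) ph < \<eta>)
       \<le> K * exp (- (a + \<epsilon>) * s)"
proof -
  define \<rho> where "\<rho> = spec_rad (Phi1 P Q g)"
  define \<delta> where "\<delta> = 2 * integ ph g - ln \<rho> - a * integ ph h"
  define r where "r = \<rho> * exp (\<delta> / 2)"
  have "\<rho> > 0" "\<delta> > 0" using spec_rad_Phi1_pos[OF P Q] slack by (simp_all add: \<rho>_def \<delta>_def)
  then have "\<rho> < r" "r > 0" and ln_r: "ln r = ln \<rho> + \<delta> / 2" by (simp_all add: r_def ln_mult)
  obtain C where "C > 0" and C: "\<forall>k a b. \<bar>mpow (Phi1 P Q g) k a b\<bar> \<le> C * r ^ k"
    using mpow_le_spec_rad_power \<open>\<rho> < r\<close> unfolding \<rho>_def by blast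
  define F where "F = (\<Sum>v\<in>UNIV. \<bar>h v\<bar>)"
  define G where "G = (\<Sum>v\<in>UNIV. \<bar>g v\<bar>)"
  have "\<forall>v. \<bar>h v\<bar> \<le> F" "\<forall>v. \<bar>g v\<bar> \<le> G" "F \<ge> 0" "G \<ge> 0"
    unfolding F_def G_def by (auto intro: member_le_sum sum_nonneg)
  obtain \<eta> \<epsilon> where "\<eta> > 0" "\<epsilon> > 0"
    and tol: "(a + \<epsilon>) * (integ ph h + 2 * \<eta> * F) + 4 * \<eta> * G \<le> a * integ ph h + \<delta> / 2"
    using ex_small_tolerances[of "\<delta> / 2" a F G "integ ph h"] \<open>\<delta> > 0\<close> \<open>a \<ge> 0\<close> \<open>F \<ge> 0\<close> \<open>G \<ge> 0\<close> by auto
  have "2 * (integ ph g - 2 * \<eta> * G) - ln r = a * integ ph h + \<delta> / 2 - 4 * \<eta> * G"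
    unfolding ln_r \<delta>_def by (simp add: algebra_simps)
  then have tol': "(a + \<epsilon>) * (integ ph h + 2 * \<eta> * F) \<le> 2 * (integ ph g - 2 * \<eta> * G) - ln r"
    using tol by linarith
  have bound: "\<forall>n a b. mpow (Phi1 P Q g) n a b \<le> C * r ^ n"
    using C by (simp add: abs_le_iff)
  define K where "K = real CARD('e \<times> 'e \<times> 'e) ^ 2 * C"
  have "K > 0" using \<open>C > 0\<close> by (simp add: K_def)
  show thesis
  proof (rule that[OF \<open>\<epsilon> > 0\<close> \<open>\<eta> > 0\<close> \<open>K > 0\<close>])
    fix s and i d1 d2 T :: nat
    assume "d1 + 1 \<le> i + T"
    from chain_prob_two_windows_exp_le[OF P Q p q bound \<open>r > 0\<close> \<open>\<forall>v. \<bar>h v\<bar> \<le> F\<close>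
        \<open>\<forall>v. \<bar>g v\<bar> \<le> G\<close> _ tol' this] \<open>\<epsilon> > 0\<close> \<open>a \<ge> 0\<close>
    show "chain_prob piP P piQ Q (i + T + d2)
         (\<lambda>X Y. real d1 * integ (emp X Y 0 0 d1) h > s \<and> tv_dist (emp X Y 0 0 d1) ph < \<eta>
            \<and> real d2 * integ (emp X Y i (i + T) d2) h > s \<and> tv_dist (emp X Y i (i + T) d2) ph < \<eta>)
       \<le> K * exp (- (a + \<epsilon>) * s)"
      unfolding K_def by simp
  qed
qed

theorem corollary5p4:
  fixes P Q :: "('e::finite) mtx" and piP piQ :: "'e \<Rightarrow> real"
    and f :: "'e \<times> 'e \<Rightarrow> int"
    and \<theta>s :: real and r ps :: "'e \<times> 'e \<Rightarrow> real"
  assumes "stochastic P" "irreducible_mtx P" "aperiodic_mtx P"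
    and "stochastic Q" "irreducible_mtx Q" "aperiodic_mtx Q"
    and "invariant_prob P piP" "invariant_prob Q piQ"
    and "Gcd (range f) = 1"
    and "(\<Sum>x\<in>UNIV. \<Sum>y\<in>UNIV. piP x * piQ y * of_int (f (x,y))) < 0"
    and C1: "\<exists>n\<ge>1. \<exists>xs ys :: nat \<Rightarrow> 'e.
              (\<forall>k<n. P (xs k) (xs ((k+1) mod n)) > 0 \<and> Q (ys k) (ys ((k+1) mod n)) > 0)
              \<and> (\<Sum>k<n. f (xs k, ys k)) > 0"
    and "\<theta>s > 0" and "spec_rad (Phi P Q f \<theta>s) = 1"
    and "\<forall>u. r u > 0"
    and "\<forall>u. (\<Sum>u'\<in>UNIV. Phi P Q f \<theta>s u u' * r u') = r u"
    and "invariant_prob (Rstar P Q f \<theta>s r) ps"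
    and "2 * J1 P Q (pihat P Q f \<theta>s r ps) > ereal (3 * \<theta>s * integ ps (\<lambda>u. of_int (f u)))"
  shows "\<exists>\<epsilon> \<eta> K. \<epsilon> > 0 \<and> \<eta> > 0 \<and> K > 0 \<and>
    (\<forall>(s::real) (i::nat) (\<delta>1::nat) (\<delta>2::nat) (T::nat).
       s > 0 \<and> T \<ge> 1 \<and> i \<le> \<delta>1 \<and> \<delta>2 \<ge> \<delta>1 - i \<and> i + T \<ge> \<delta>1 + 1 \<longrightarrow>
       chain_prob piP P piQ Q (max \<delta>1 (i + T + \<delta>2))
         (\<lambda>X Y. real \<delta>1 * integ (emp X Y 0 0 \<delta>1) (\<lambda>(_, u'). of_int (f u')) > s
              \<and> tv_dist (emp X Y 0 0 \<delta>1) (pihat P Q f \<theta>s r ps) < \<eta>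
              \<and> real \<delta>2 * integ (emp X Y i (i + T) \<delta>2) (\<lambda>(_, u'). of_int (f u')) > s
              \<and> tv_dist (emp X Y i (i + T) \<delta>2) (pihat P Q f \<theta>s r ps) < \<eta>)
       \<le> K * exp (- (3 * \<theta>s / 2 + \<epsilon>) * s))"
proof -
  let ?ph = "pihat P Q f \<theta>s r ps" and ?h = "\<lambda>(_, u'). real_of_int (f u')"
  have "integ ?ph ?h = integ ps (\<lambda>u. of_int (f u))"
    using integ_pihat[OF \<open>invariant_prob (Rstar P Q f \<theta>s r) ps\<close>] .
  then obtain g where g: "3 * \<theta>s / 2 * integ ?ph ?h < 2 * integ ?ph g - ln (spec_rad (Phi1 P Q g))"
    using J1_gt_imp_ex[OF \<open>2 * J1 P Q ?ph > _\<close>] by auto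
  let ?event = "\<lambda>\<eta> s i d1 d2 T X Y. real d1 * integ (emp X Y 0 0 d1) ?h > s
    \<and> tv_dist (emp X Y 0 0 d1) ?ph < \<eta>
    \<and> real d2 * integ (emp X Y i (i + T) d2) ?h > s \<and> tv_dist (emp X Y i (i + T) d2) ?ph < \<eta>"
  have "0 \<le> 3 * \<theta>s / 2" using \<open>\<theta>s > 0\<close> by simp
  with two_windows_large_deviation[OF \<open>stochastic P\<close> \<open>stochastic Q\<close>
      invariant_prob_imp_prob_vector[OF \<open>invariant_prob P piP\<close>]
      invariant_prob_imp_prob_vector[OF \<open>invariant_prob Q piQ\<close>] _ g]
  obtain \<epsilon> \<eta> K where "\<epsilon> > 0" "\<eta> > 0" "K > 0" and bound: "\<And>s i d1 d2 T. d1 + 1 \<le> i + T \<Longrightarrow>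
      chain_prob piP P piQ Q (i + T + d2) (?event \<eta> s i d1 d2 T) \<le> K * exp (- (3 * \<theta>s / 2 + \<epsilon>) * s)"
    by blast
  have max_bound: "chain_prob piP P piQ Q (max d1 (i + T + d2)) (?event \<eta> s i d1 d2 T)
      \<le> K * exp (- (3 * \<theta>s / 2 + \<epsilon>) * s)" if "d1 + 1 \<le> i + T" for s i d1 d2 T
  proof -
    have "max d1 (i + T + d2) = i + T + d2" using that by simp
    then show ?thesis using bound[OF that] by (simp only:)
  qed
  show ?thesis
    by (rule exI[of _ \<epsilon>], rule exI[of _ \<eta>], rule exI[of _ K], intro conjI allI impI max_bound)
      (use \<open>\<epsilon> > 0\<close> \<open>\<eta> > 0\<close> \<open>K > 0\<close> in auto)
qed

end
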